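(* The set $\{\ket{\psi_{00}},\ket{\psi_{02}},\ket{\psi_{20}},\ket{\psi_{22}}\}$ of generalized Bell states in $\mathbb{C}^4\otimes\mathbb{C}^4$ is perfectly distinguishable by one-way LOCC using only projective measurements.
   Context: Generalized Bell states in $\mathbb{C}^4\otimes\mathbb{C}^4$ (Alice holds the first factor, Bob the second): $\ket{\psi_{nm}}=\frac12\sum_{j=0}^{3}e^{2\pi i jn/4}\ket{j}_A\ket{j\oplus_4 m}_B$ for $n,m\in\{0,1,2,3\}$, where $j\oplus_4 m=(j+m)\bmod 4$. Perfect distinguishability by one-way LOCC using only projective measurements means: one party performs a projective measurement on her subsystem, communicates the outcome classically, and the other party then performs a projective measurement (depending on that outcome) whose result identifies with certainty which state of the set was shared. *)

theory Defs
  imports Complex_Main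
begin

text \<open>Operators on C^d are represented as functions nat => nat => complex (entries i j with
i, j < d); states in C^4 (x) C^4 as functions nat => nat => complex, where psi j k is the
coefficient of |j>_A |k>_B (j, k < 4).\<close>

type_synonym op = "nat \<Rightarrow> nat \<Rightarrow> complex"
type_synonym bstate = "nat \<Rightarrow> nat \<Rightarrow> complex"

definition projective_measurement :: "nat \<Rightarrow> nat \<Rightarrow> (nat \<Rightarrow> op) \<Rightarrow> bool" where
  "projective_measurement d m P \<longleftrightarrow>
     (\<forall>a<m. \<forall>i<d. \<forall>j<d. P a i j = cnj (P a j i)) \<and>
     (\<forall>a<m. \<forall>b<m. \<forall>i<d. \<forall>j<d.
        (\<Sum>l<d. P a i l * P b l j) = (if a = b then P a i j else 0)) \<and>
     (\<forall>i<d. \<forall>j<d. (\<Sum>a<m. P a i j) = (if i = j then 1 else 0))"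

definition outcome_prob :: "op \<Rightarrow> op \<Rightarrow> bstate \<Rightarrow> real" where
  "outcome_prob A B psi =
     (\<Sum>j<4. \<Sum>k<4. (cmod (\<Sum>j'<4. \<Sum>k'<4. A j j' * B k k' * psi j' k'))\<^sup>2)"

text \<open>One-way LOCC with projective measurements, Alice first: Alice measures (m outcomes),
tells Bob outcome a, Bob measures with a measurement depending on a (n a outcomes),
and the guess g a b identifies the state with certainty: every outcome pair occurring
with nonzero probability for state l is assigned the label l.\<close>
definition one_way_AB_distinguishable :: "'l set \<Rightarrow> ('l \<Rightarrow> bstate) \<Rightarrow> bool" where
  "one_way_AB_distinguishable L psi \<longleftrightarrow>
     (\<exists>m P n Q g. projective_measurement 4 m P \<and>
        (\<forall>a<m. projective_measurement 4 (n a) (Q a)) \<and>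
        (\<forall>a<m. \<forall>b<n a. \<forall>l\<in>L.
            outcome_prob (P a) (Q a b) (psi l) \<noteq> 0 \<longrightarrow> g a b = l))"

definition one_way_BA_distinguishable :: "'l set \<Rightarrow> ('l \<Rightarrow> bstate) \<Rightarrow> bool" where
  "one_way_BA_distinguishable L psi \<longleftrightarrow>
     (\<exists>m Q n P g. projective_measurement 4 m Q \<and>
        (\<forall>b<m. projective_measurement 4 (n b) (P b)) \<and>
        (\<forall>b<m. \<forall>a<n b. \<forall>l\<in>L.
            outcome_prob (P b a) (Q b) (psi l) \<noteq> 0 \<longrightarrow> g b a = l))"

definition one_way_proj_LOCC_distinguishable :: "'l set \<Rightarrow> ('l \<Rightarrow> bstate) \<Rightarrow> bool" where
  "one_way_proj_LOCC_distinguishable L psi \<longleftrightarrow>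
     one_way_AB_distinguishable L psi \<or> one_way_BA_distinguishable L psi"

definition bell4 :: "nat \<times> nat \<Rightarrow> bstate" where
  "bell4 nm j k =
     (if j < 4 \<and> k < 4 \<and> k = (j + snd nm) mod 4
      then cis (2 * pi * real j * real (fst nm) / 4) / 2 else 0)"

end

theory Submission
  imports Defs
begin

text \<open>Both parties measure in the basis (|2q> +- |2q+1>)/sqrt 2, q = 0, 1.
For n, m in {0, 2} the state psi_nm pairs Alice's block q with Bob's block q + m/2 (mod 2),
and within such a pair it is |00> + (-1)^(n/2) |11>, i.e. |++> + |--> for n = 0 and
|+-> + |-+> for n = 2. So whether the two blocks agree reveals m, and whether the two
signs agree reveals n; Alice's outcome need not even be used by Bob.\<close>

lemma all_less_4_iff: "(\<forall>a<(4::nat). P a) \<longleftrightarrow> P 0 \<and> P 1 \<and> P 2 \<and> P 3"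
  by (auto simp: less_Suc_eq numeral_eq_Suc)

lemma sum_lessThan_4: "(\<Sum>a<(4::nat). f a) = f 0 + f 1 + f 2 + f 3"
  by (simp add: numeral_eq_Suc)

definition local_amplitude :: "op \<Rightarrow> op \<Rightarrow> bstate \<Rightarrow> nat \<Rightarrow> nat \<Rightarrow> complex" where
  "local_amplitude A B psi j k = (\<Sum>j'<4. \<Sum>k'<4. A j j' * B k k' * psi j' k')"

lemma outcome_prob_eq_0_iff:
  "outcome_prob A B psi = 0 \<longleftrightarrow> (\<forall>j<4. \<forall>k<4. local_amplitude A B psi j k = 0)"
  unfolding outcome_prob_def local_amplitude_def
  by (auto simp: sum_nonneg_eq_0_iff sum_nonneg)

lemma one_way_AB_distinguishableI:
  assumes "projective_measurement 4 m P"
    and "\<forall>a<m. projective_measurement 4 (n a) (Q a)"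
    and "\<And>a b l j k. a < m \<Longrightarrow> b < n a \<Longrightarrow> l \<in> L \<Longrightarrow> g a b \<noteq> l \<Longrightarrow> j < 4 \<Longrightarrow> k < 4 \<Longrightarrow>
           local_amplitude (P a) (Q a b) (psi l) j k = 0"
  shows "one_way_AB_distinguishable L psi"
  unfolding one_way_AB_distinguishable_def
proof (intro exI conjI allI impI ballI)
  fix a b l assume "a < m" "b < n a" "l \<in> L" "outcome_prob (P a) (Q a b) (psi l) \<noteq> 0"
  then obtain j k where "j < 4" "k < 4" "local_amplitude (P a) (Q a b) (psi l) j k \<noteq> 0"
    by (auto simp: outcome_prob_eq_0_iff)
  with \<open>a < m\<close> \<open>b < n a\<close> \<open>l \<in> L\<close> show "g a b = l"
    using assms(3) by blast
qed (use assms in auto)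

text \<open>Outcome c = 2q + s projects onto (|2q> + (-1)^s |2q+1>)/sqrt 2.\<close>

definition pair_sign_proj :: "nat \<Rightarrow> op" where
  "pair_sign_proj c i j =
     (if i div 2 = c div 2 \<and> j div 2 = c div 2 then
        (if even ((c mod 2) * (i + j)) then 1/2 else -1/2)
      else 0)"

lemma projective_measurement_pair_sign_proj: "projective_measurement 4 4 pair_sign_proj"
  unfolding projective_measurement_def all_less_4_iff sum_lessThan_4
  by (simp add: pair_sign_proj_def)

lemma bell4_0:
  "bell4 (0, m) j k = (if j < 4 \<and> k < 4 \<and> k = (j + m) mod 4 then 1/2 else 0)"
  by (simp add: bell4_def)

lemma bell4_2:
  "bell4 (2, m) j k = (if j < 4 \<and> k < 4 \<and> k = (j + m) mod 4 then (-1)^j/2 else 0)"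
proof -
  have "cis (2 * pi * real j * real (2::nat) / 4) = cis pi ^ j"
    by (simp only: DeMoivre) (simp add: mult.commute)
  then have "cis (2 * pi * real j * real (2::nat) / 4) = (-1) ^ j"
    by simp
  then show ?thesis
    by (simp add: bell4_def)
qed

definition bell_guess :: "nat \<Rightarrow> nat \<Rightarrow> nat \<times> nat" where
  "bell_guess a b =
     (if a mod 2 = b mod 2 then 0 else 2, if a div 2 = b div 2 then 0 else 2)"

lemma local_amplitude_pair_sign_proj_eq_0:
  assumes "a < 4" "b < 4" "j < 4" "k < 4"
    and "l \<in> {(0,0), (0,2), (2,0), (2,2)}" "bell_guess a b \<noteq> l"
  shows "local_amplitude (pair_sign_proj a) (pair_sign_proj b) (bell4 l) j k = 0"
proof -
  have "\<forall>a<4. \<forall>b<4. \<forall>j<4. \<forall>k<4. bell_guess a b \<noteq> (n, m) \<longrightarrow>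
          local_amplitude (pair_sign_proj a) (pair_sign_proj b) (bell4 (n, m)) j k = 0"
    if "n \<in> {0, 2}" "m \<in> {0, 2}" for n m
    using that unfolding all_less_4_iff local_amplitude_def sum_lessThan_4
    by (auto simp: pair_sign_proj_def bell4_0 bell4_2 bell_guess_def)
  then show ?thesis
    using assms by (cases l) auto
qed

theorem theorem8:
  shows "one_way_proj_LOCC_distinguishable {(0,0), (0,2), (2,0), (2,2)} bell4"
  unfolding one_way_proj_LOCC_distinguishable_def
proof (rule disjI1, rule one_way_AB_distinguishableI[where g = bell_guess])
  show "projective_measurement 4 4 pair_sign_proj"
    by (rule projective_measurement_pair_sign_proj)
  show "\<forall>a<4. projective_measurement 4 4 pair_sign_proj"
    using projective_measurement_pair_sign_proj by blast
qed (rule local_amplitude_pair_sign_proj_eq_0)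

end
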